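(* Let $n,g,k,p\in\mathbb N$. Define the following four sets. (1) $\widetilde a_{g,p}(n)$ is the set of fixed-point-free involutions $\pi$ of $[2n]$ such that $\#(\pi^{-1}1_{2n})=n+1-2g$, $\pi(a)$ is odd for every even $a\in[2n]$, and the restriction of $\pi^{-1}1_{2n}$ to the odd elements $\{1,3,\ldots,2n-1\}$ (which it preserves) has exactly $p$ cycles. Here $1_{2n}=(1,2,\ldots,2n)$. (2) On $\pm[2n]$ let $\tau_0=(1,-1)\cdots(2n,-2n)$, $\tau_2=(-1,2)(-2,3)\cdots(-2n,1)$, $B(n)=\{1,3,\ldots,2n-1\}\cup\{-2,-4,\ldots,-2n\}$ and $W(n)=\{2,4,\ldots,2n\}\cup\{-1,-3,\ldots,1-2n\}$. $\widetilde b_{k,p}(n)$ is the set of fixed-point-free involutions $\tau_1$ of $\pm[2n]$ such that $\#(\tau_2\tau_1)=2n+2-2k$, $\tau_0\tau_1=\tau_1\tau_0$, $\tau_0\tau_1$ is fixed-point free, there exists $a\in[2n]$ with $\tau_1(a)\in[2n]$, $\tau_1(B(n))\subseteq B(n)$, and the restriction of $\tau_2\tau_1$ to $W(n)$ (which it preserves) has exactly $2p$ cycles. (3) $\widehat a_{g,p}(n)$ is the set of permutations $\pi$ of $[n]$ with $\#(\pi)=p$ and $\#(\pi^{-1}1_n)=n-p+1-2g$, where $1_n=(1,\ldots,n)$. (4) On $\pm[n]$ let $\tau_0=(1,-1)\cdots(n,-n)$ and $\widetilde 1_n=(1,\ldots,n)(-n,\ldots,-1)$. $\widehat b_{k,p}(n)$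 is the set of permutations $\tau_1$ of $\pm[n]$ such that $\#(\tau_1)=2p$, $\#(\widetilde 1_n\tau_1)=2(n-p+1-k)$, $\tau_0\tau_1\tau_0=\tau_1^{-1}$, $\tau_0\tau_1$ is fixed-point free, and there exists $a\in[n]$ with $\tau_1(a)\in-[n]$. Then there are bijections $\widetilde a_{g,p}(n)\cong\widehat a_{g,p}(n)$ and $\widetilde b_{k,p}(n)\cong\widehat b_{k,p}(n)$.
   Context: Permutations are composed right to left, $(\sigma\rho)(x)=\sigma(\rho(x))$; $\#(\sigma)$ denotes the number of cycles of $\sigma$ including fixed points; $[m]=\{1,\ldots,m\}$, $-[m]=\{-1,\ldots,-m\}$, $\pm[m]=[m]\cup-[m]$. The sets in (1),(2) encode bipartite ribbon graphs (orientable of genus $g$, resp. non-orientable of Euler genus $k$) with $p$ white boundaries, and those in (3),(4) the corresponding combinatorial hypermaps. *)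

theory Defs
  imports "HOL-Combinatorics.Permutations"
begin

text \<open>Permutations are functions int => int, identity outside their support set.
  Composition right to left: sigma rho = sigma o rho.\<close>

definition posset :: "nat \<Rightarrow> int set" where
  "posset m = {1..int m}"

definition negset :: "nat \<Rightarrow> int set" where
  "negset m = {- int m..-1}"

definition pmset :: "nat \<Rightarrow> int set" where
  "pmset m = posset m \<union> negset m"

definition orb :: "(int \<Rightarrow> int) \<Rightarrow> int \<Rightarrow> int set" where
  "orb f x = {y. \<exists>k::nat. (f ^^ k) x = y}"

definition ncycles :: "(int \<Rightarrow> int) \<Rightarrow> int set \<Rightarrow> nat" where
  "ncycles f A = card (orb f ` A)"

definition fpf_involution :: "(int \<Rightarrow> int) \<Rightarrow> int set \<Rightarrow> bool" where
  "fpf_involution f S \<longleftrightarrow> f permutes S \<and> (\<forall>x\<in>S. f (f x) = x \<and> f x \<noteq> x)"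

definition fpf_on :: "(int \<Rightarrow> int) \<Rightarrow> int set \<Rightarrow> bool" where
  "fpf_on f S \<longleftrightarrow> (\<forall>x\<in>S. f x \<noteq> x)"

definition long_cycle :: "nat \<Rightarrow> int \<Rightarrow> int" where
  "long_cycle m = (\<lambda>x. if 1 \<le> x \<and> x < int m then x + 1
                       else if x = int m \<and> m \<ge> 1 then 1 else x)"

definition tau0 :: "nat \<Rightarrow> int \<Rightarrow> int" where
  "tau0 m = (\<lambda>x. if x \<in> pmset m then - x else x)"

text \<open>tau_2 = (-1,2)(-2,3)...(-2n,1) on +-[2n] (given m = 2n).\<close>
definition tau2 :: "nat \<Rightarrow> int \<Rightarrow> int" where
  "tau2 m = (\<lambda>x. if x \<in> negset m then (if - x < int m then - x + 1 else 1)
                 else if x \<in> posset m then (if x = 1 then - int m else - (x - 1))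
                 else x)"

definition long_cycle_pm :: "nat \<Rightarrow> int \<Rightarrow> int" where
  "long_cycle_pm m = (\<lambda>x. if x \<in> negset m then (if x < -1 then x + 1 else - int m)
                         else long_cycle m x)"

definition Bset :: "nat \<Rightarrow> int set" where
  "Bset n = {x \<in> posset (2*n). odd x} \<union> {x \<in> negset (2*n). even x}"

definition Wset :: "nat \<Rightarrow> int set" where
  "Wset n = {x \<in> posset (2*n). even x} \<union> {x \<in> negset (2*n). odd x}"

definition a_tilde :: "nat \<Rightarrow> nat \<Rightarrow> nat \<Rightarrow> (int \<Rightarrow> int) set" where
  "a_tilde g p n = {\<pi>. fpf_involution \<pi> (posset (2*n))
      \<and> int (ncycles (inv \<pi> \<circ> long_cycle (2*n)) (posset (2*n))) = int n + 1 - 2 * int g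
      \<and> (\<forall>a\<in>posset (2*n). even a \<longrightarrow> odd (\<pi> a))
      \<and> ncycles (inv \<pi> \<circ> long_cycle (2*n)) {x \<in> posset (2*n). odd x} = p}"

definition b_tilde :: "nat \<Rightarrow> nat \<Rightarrow> nat \<Rightarrow> (int \<Rightarrow> int) set" where
  "b_tilde k p n = {\<tau>1. fpf_involution \<tau>1 (pmset (2*n))
      \<and> int (ncycles (tau2 (2*n) \<circ> \<tau>1) (pmset (2*n))) = 2 * int n + 2 - 2 * int k
      \<and> tau0 (2*n) \<circ> \<tau>1 = \<tau>1 \<circ> tau0 (2*n)
      \<and> fpf_on (tau0 (2*n) \<circ> \<tau>1) (pmset (2*n))
      \<and> (\<exists>a\<in>posset (2*n). \<tau>1 a \<in> posset (2*n))
      \<and> \<tau>1 ` Bset n \<subseteq> Bset n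
      \<and> ncycles (tau2 (2*n) \<circ> \<tau>1) (Wset n) = 2 * p}"

definition a_hat :: "nat \<Rightarrow> nat \<Rightarrow> nat \<Rightarrow> (int \<Rightarrow> int) set" where
  "a_hat g p n = {\<pi>. \<pi> permutes posset n
      \<and> ncycles \<pi> (posset n) = p
      \<and> int (ncycles (inv \<pi> \<circ> long_cycle n) (posset n)) = int n - int p + 1 - 2 * int g}"

definition b_hat :: "nat \<Rightarrow> nat \<Rightarrow> nat \<Rightarrow> (int \<Rightarrow> int) set" where
  "b_hat k p n = {\<tau>1. \<tau>1 permutes pmset n
      \<and> ncycles \<tau>1 (pmset n) = 2 * p
      \<and> int (ncycles (long_cycle_pm n \<circ> \<tau>1) (pmset n)) = 2 * (int n - int p + 1 - int k)
      \<and> tau0 n \<circ> \<tau>1 \<circ> tau0 n = inv \<tau>1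
      \<and> fpf_on (tau0 n \<circ> \<tau>1) (pmset n)
      \<and> (\<exists>a\<in>posset n. \<tau>1 a \<in> negset n)}"

end

theory Submission
  imports Defs
begin

(* Both bijections are relabellings.

   (a) A fixed-point-free involution pi of [2n] sending even points to odd ones is the same thing
   as the permutation rho of [n] with pi(2i) = 2 rho(i) - 1.  The permutation pi^-1 1_2n = pi 1_2n
   preserves the odd and the even points, and under i \<mapsto> 2i-1 resp. i \<mapsto> 2i it is
   conjugate there to rho resp. to rho^-1 1_n.  Hence its cycles on the odd points count #(rho),
   and all its cycles count #(rho) + #(rho^-1 1_n).

   (b) A tau_1 that commutes with tau_0 and preserves B(n) also preserves W(n) = -B(n).  Relabel
   W(n) by \<plusminus>[n] so that tau_2 becomes negation; then tau_2 tau_1 on W(n) becomes a permutation t of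
   \<plusminus>[n] with tau_0 t tau_0 = t^-1, and on B(n), relabelled through -W(n), it becomes 1~_n t.
   The fixed-point conditions translate one by one, and so does the existence of a in [2n] with
   tau_1(a) in [2n], because a permutation of \<plusminus>[n] that sends some negative point to a positive
   one also sends some positive point to a negative one. *)

lemma mem_posset: "x \<in> posset m \<longleftrightarrow> 1 \<le> x \<and> x \<le> int m"
  by (simp add: posset_def)

lemma mem_negset: "x \<in> negset m \<longleftrightarrow> - int m \<le> x \<and> x \<le> -1"
  by (auto simp: negset_def)

lemma mem_pmset:
  "x \<in> pmset m \<longleftrightarrow> (1 \<le> x \<and> x \<le> int m) \<or> (- int m \<le> x \<and> x \<le> -1)"
  by (simp add: pmset_def mem_posset mem_negset)

lemma pmset_nonzero: "x \<in> pmset m \<Longrightarrow> x \<noteq> 0"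
  by (auto simp: mem_pmset)

lemma posset_iff_pos: "x \<in> pmset m \<Longrightarrow> x \<in> posset m \<longleftrightarrow> 0 < x"
  by (auto simp: mem_pmset mem_posset)

lemma uminus_in_pmset_iff: "- x \<in> pmset m \<longleftrightarrow> x \<in> pmset m"
  by (auto simp: mem_pmset)

lemma finite_posset: "finite (posset m)"
  by (simp add: posset_def)

lemma finite_pmset: "finite (pmset m)"
  by (simp add: pmset_def posset_def negset_def)

lemma long_cycle_eq:
  "long_cycle m x = (if 1 \<le> x \<and> x < int m then x + 1 else if x = int m \<and> m \<ge> 1 then 1 else x)"
  by (simp add: long_cycle_def)

subsection \<open>Orbits and cycle counts\<close>

lemma funpow_semiconj:
  assumes "\<forall>x\<in>A. f x \<in> A" "\<forall>x\<in>A. g (h x) = h (f x)" "x \<in> A"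
  shows "(g ^^ k) (h x) = h ((f ^^ k) x) \<and> (f ^^ k) x \<in> A"
  using assms(3) by (induction k) (auto simp: assms(1,2))

lemma orb_subset: "\<forall>x\<in>A. f x \<in> A \<Longrightarrow> x \<in> A \<Longrightarrow> orb f x \<subseteq> A"
  unfolding orb_def using funpow_semiconj[of A f f id x] by auto

lemma orb_refl: "x \<in> orb f x"
  unfolding orb_def by (rule CollectI, rule exI[of _ 0]) simp

lemma orb_semiconj:
  assumes "\<forall>x\<in>A. f x \<in> A" "\<forall>x\<in>A. g (h x) = h (f x)" "x \<in> A"
  shows "orb g (h x) = h ` orb f x"
  unfolding orb_def using funpow_semiconj[OF assms] by auto

lemma ncycles_image_semiconj:
  assumes "inj_on h A" "\<forall>x\<in>A. f x \<in> A" "\<forall>x\<in>A. g (h x) = h (f x)"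
  shows "ncycles g (h ` A) = ncycles f A"
proof -
  have "orb g ` h ` A = image h ` orb f ` A"
    unfolding image_image by (rule image_cong) (simp_all add: orb_semiconj[OF assms(2,3)])
  moreover have "inj_on (image h) (orb f ` A)"
    by (rule inj_on_subset[OF inj_on_image_Pow[OF assms(1)]]) (use orb_subset[OF assms(2)] in auto)
  ultimately show ?thesis
    unfolding ncycles_def by (simp add: card_image)
qed

lemma ncycles_Un_disjoint:
  assumes "finite A" "finite B" "A \<inter> B = {}" "\<forall>x\<in>A. f x \<in> A" "\<forall>x\<in>B. f x \<in> B"
  shows "ncycles f (A \<union> B) = ncycles f A + ncycles f B"
proof -
  have "orb f x \<noteq> orb f y" if "x \<in> A" "y \<in> B" for x y
    using orb_refl[of x f] orb_subset[OF assms(5) \<open>y \<in> B\<close>] assms(3) that(1) by blast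
  then have "orb f ` A \<inter> orb f ` B = {}"
    by blast
  then show ?thesis
    unfolding ncycles_def image_Un using assms(1,2) by (simp add: card_Un_disjoint)
qed

lemma fpf_involution_iff:
  "fpf_involution f S \<longleftrightarrow>
     (\<forall>x\<in>S. f x \<in> S \<and> f (f x) = x \<and> f x \<noteq> x) \<and> (\<forall>x. x \<notin> S \<longrightarrow> f x = x)"
proof
  assume "fpf_involution f S"
  then show "(\<forall>x\<in>S. f x \<in> S \<and> f (f x) = x \<and> f x \<noteq> x) \<and> (\<forall>x. x \<notin> S \<longrightarrow> f x = x)"
    unfolding fpf_involution_def using permutes_in_image[of f S] permutes_not_in[of f S] by blast
next
  assume inv: "(\<forall>x\<in>S. f x \<in> S \<and> f (f x) = x \<and> f x \<noteq> x) \<and> (\<forall>x. x \<notin> S \<longrightarrow> f x = x)"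
  have "bij_betw f S S"
    by (rule bij_betw_byWitness[where f' = f]) (use inv in auto)
  then have "f permutes S"
    using inv by (simp add: bij_imp_permutes)
  then show "fpf_involution f S"
    using inv unfolding fpf_involution_def by blast
qed

lemma inv_fpf_involution:
  assumes "fpf_involution f S"
  shows "inv f = f"
proof -
  have "f (f x) = x" for x
    using assms unfolding fpf_involution_iff by (cases "x \<in> S") auto
  then have "f \<circ> f = id"
    by auto
  then show ?thesis
    using inv_unique_comp by blast
qed

lemma permutes_of_inj_on:
  assumes "finite S" "\<forall>x\<in>S. f x \<in> S" "inj_on f S" "\<forall>x. x \<notin> S \<longrightarrow> f x = x"
  shows "f permutes S"
proof (rule bij_imp_permutes)
  show "bij_betw f S S"
    using endo_inj_surj[OF assms(1) _ assms(3)] assms(2,3) by (auto simp: bij_betw_def)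
qed (use assms(4) in blast)

lemma inj_finite_enter_exit:
  assumes "inj f" "finite A" "x \<notin> A" "f x \<in> A"
  shows "\<exists>a\<in>A. f a \<notin> A"
proof (rule ccontr)
  assume "\<not> (\<exists>a\<in>A. f a \<notin> A)"
  then have "f ` A = A"
    using endo_inj_surj[OF assms(2)] inj_on_subset[OF assms(1)] by blast
  then obtain a where "a \<in> A" "f a = f x"
    using assms(4) by (metis imageE)
  then show False
    using assms(1,3) by (metis injD)
qed

lemma permutes_pmset_sign_change_iff:
  assumes "f permutes pmset m"
  shows "(\<exists>a\<in>posset m. f a \<in> negset m) \<longleftrightarrow> (\<exists>y\<in>pmset m. (0 < y) \<noteq> (0 < f y))"
proof
  assume "\<exists>a\<in>posset m. f a \<in> negset m"
  then obtain a where "a \<in> posset m" "f a \<in> negset m"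
    by blast
  then show "\<exists>y\<in>pmset m. (0 < y) \<noteq> (0 < f y)"
    by (intro bexI[of _ a]) (auto simp: pmset_def mem_posset mem_negset)
next
  assume "\<exists>y\<in>pmset m. (0 < y) \<noteq> (0 < f y)"
  then obtain y where y: "y \<in> pmset m" "(0 < y) \<noteq> (0 < f y)"
    by blast
  have f_in: "f x \<in> pmset m" if "x \<in> pmset m" for x
    using that permutes_in_image[OF assms] by blast
  obtain a where "a \<in> posset m" "f a \<notin> posset m"
  proof (cases "0 < y")
    case True
    then show ?thesis
      using that y posset_iff_pos f_in by blast
  next
    case False
    then have "y \<notin> posset m" "f y \<in> posset m"
      using y posset_iff_pos f_in by blast+
    then show ?thesis
      using that inj_finite_enter_exit[OF permutes_inj[OF assms] finite_posset] by blast
  qed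
  moreover have "a \<in> pmset m"
    using \<open>a \<in> posset m\<close> by (simp add: pmset_def)
  ultimately show "\<exists>a\<in>posset m. f a \<in> negset m"
    using f_in unfolding pmset_def by blast
qed

subsection \<open>Bipartite matchings of [2n] and permutations of [n]\<close>

lemma odd_posset_double: "{x \<in> posset (2*n). odd x} = (\<lambda>i. 2*i - 1) ` posset n"
proof -
  have "x \<in> (\<lambda>i. 2*i - 1) ` posset n" if "x \<in> posset (2*n)" "odd x" for x
  proof -
    obtain k where "x = 2*k + 1"
      using \<open>odd x\<close> by (rule oddE)
    then show ?thesis
      using that(1) by (intro image_eqI[of _ _ "k + 1"]) (auto simp: mem_posset)
  qed
  then show ?thesis
    by (auto simp: mem_posset)
qed

lemma even_posset_double: "{x \<in> posset (2*n). even x} = (\<lambda>i. 2*i) ` posset n"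
proof -
  have "x \<in> (\<lambda>i. 2*i) ` posset n" if "x \<in> posset (2*n)" "even x" for x
  proof -
    obtain k where "x = 2*k"
      using \<open>even x\<close> by (rule evenE)
    then show ?thesis
      using that(1) by (intro image_eqI[of _ _ k]) (auto simp: mem_posset)
  qed
  then show ?thesis
    by (auto simp: mem_posset)
qed

lemma double_in_posset:
  "i \<in> posset n \<Longrightarrow> 2*i \<in> posset (2*n)"
  "i \<in> posset n \<Longrightarrow> 2*i - 1 \<in> posset (2*n)"
  by (simp_all add: mem_posset)

lemma posset_double_cases:
  assumes "x \<in> posset (2*n)"
  obtains (even) i where "i \<in> posset n" "x = 2*i"
        | (odd) i where "i \<in> posset n" "x = 2*i - 1"
  using assms odd_posset_double[of n] even_posset_double[of n] by blast

definition parity_matchings :: "nat \<Rightarrow> (int \<Rightarrow> int) set" where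
  "parity_matchings n =
     {\<pi>. fpf_involution \<pi> (posset (2*n)) \<and> (\<forall>a\<in>posset (2*n). even a \<longrightarrow> odd (\<pi> a))}"

definition matching_perm :: "nat \<Rightarrow> (int \<Rightarrow> int) \<Rightarrow> int \<Rightarrow> int" where
  "matching_perm n \<pi> = (\<lambda>i. if i \<in> posset n then (\<pi> (2*i) + 1) div 2 else i)"

definition perm_matching :: "nat \<Rightarrow> (int \<Rightarrow> int) \<Rightarrow> int \<Rightarrow> int" where
  "perm_matching n \<rho> = (\<lambda>x. if x \<in> posset (2*n) then
       if even x then 2 * \<rho> (x div 2) - 1 else 2 * inv \<rho> ((x + 1) div 2)
     else x)"

lemma perm_matching_even: "i \<in> posset n \<Longrightarrow> perm_matching n \<rho> (2*i) = 2 * \<rho> i - 1"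
  by (simp add: perm_matching_def double_in_posset)

lemma perm_matching_odd: "i \<in> posset n \<Longrightarrow> perm_matching n \<rho> (2*i - 1) = 2 * inv \<rho> i"
  by (simp add: perm_matching_def double_in_posset)

lemma perm_matching_outside: "x \<notin> posset (2*n) \<Longrightarrow> perm_matching n \<rho> x = x"
  by (simp add: perm_matching_def)

lemma long_cycle_double:
  "i \<in> posset n \<Longrightarrow> long_cycle (2*n) (2*i - 1) = 2*i"
  "i \<in> posset n \<Longrightarrow> long_cycle (2*n) (2*i) = 2 * long_cycle n i - 1"
  "i \<in> posset n \<Longrightarrow> long_cycle n i \<in> posset n"
  by (auto simp: long_cycle_eq mem_posset)

context
  fixes n :: nat and \<pi> :: "int \<Rightarrow> int"
  assumes matching: "\<pi> \<in> parity_matchings n"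
begin

lemma parity_matchingD:
  "x \<in> posset (2*n) \<Longrightarrow> \<pi> x \<in> posset (2*n)"
  "x \<in> posset (2*n) \<Longrightarrow> \<pi> (\<pi> x) = x"
  "x \<in> posset (2*n) \<Longrightarrow> even x \<Longrightarrow> odd (\<pi> x)"
  "x \<notin> posset (2*n) \<Longrightarrow> \<pi> x = x"
  using matching unfolding parity_matchings_def fpf_involution_iff by blast+

lemma matching_perm_even:
  assumes "i \<in> posset n"
  shows "matching_perm n \<pi> i \<in> posset n" "\<pi> (2*i) = 2 * matching_perm n \<pi> i - 1"
proof -
  have "\<pi> (2*i) \<in> {x \<in> posset (2*n). odd x}"
    using parity_matchingD(1,3) double_in_posset(1)[OF assms] by simp
  then obtain j where "j \<in> posset n" "\<pi> (2*i) = 2*j - 1"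
    unfolding odd_posset_double by blast
  then show "matching_perm n \<pi> i \<in> posset n" "\<pi> (2*i) = 2 * matching_perm n \<pi> i - 1"
    using assms by (simp_all add: matching_perm_def)
qed

lemma matching_perm_permutes: "matching_perm n \<pi> permutes posset n"
proof (rule permutes_of_inj_on)
  show "inj_on (matching_perm n \<pi>) (posset n)"
  proof (rule inj_onI)
    fix i j
    assume "i \<in> posset n" "j \<in> posset n" "matching_perm n \<pi> i = matching_perm n \<pi> j"
    then have "\<pi> (\<pi> (2*i)) = \<pi> (\<pi> (2*j))"
      using matching_perm_even by metis
    then show "i = j"
      using \<open>i \<in> posset n\<close> \<open>j \<in> posset n\<close> parity_matchingD(2) double_in_posset(1)
      by simp
  qed
  show "\<forall>i\<in>posset n. matching_perm n \<pi> i \<in> posset n"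
    using matching_perm_even(1) by blast
qed (simp_all add: posset_def matching_perm_def)

lemma inv_matching_perm_in: "j \<in> posset n \<Longrightarrow> inv (matching_perm n \<pi>) j \<in> posset n"
  by (simp only: permutes_in_image[OF permutes_inv[OF matching_perm_permutes]])

lemma matching_perm_odd:
  assumes "j \<in> posset n"
  shows "\<pi> (2*j - 1) = 2 * inv (matching_perm n \<pi>) j"
proof -
  define m where "m = inv (matching_perm n \<pi>) j"
  have "m \<in> posset n" "matching_perm n \<pi> m = j"
    unfolding m_def using assms inv_matching_perm_in
    by (simp_all add: permutes_inverses(1)[OF matching_perm_permutes])
  then have "\<pi> (2*j - 1) = \<pi> (\<pi> (2*m))"
    using matching_perm_even(2) by metis
  then show ?thesis
    using parity_matchingD(2)[OF double_in_posset(1)[OF \<open>m \<in> posset n\<close>]] m_def by simp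
qed

lemma ncycles_matching_odds:
  "ncycles (\<pi> \<circ> long_cycle (2*n)) {x \<in> posset (2*n). odd x} = ncycles (matching_perm n \<pi>) (posset n)"
  unfolding odd_posset_double
  by (rule ncycles_image_semiconj) (auto simp: inj_on_def long_cycle_double matching_perm_even)

lemma ncycles_matching_evens:
  "ncycles (\<pi> \<circ> long_cycle (2*n)) {x \<in> posset (2*n). even x}
     = ncycles (inv (matching_perm n \<pi>) \<circ> long_cycle n) (posset n)"
  unfolding even_posset_double
  by (rule ncycles_image_semiconj)
    (auto simp: inj_on_def long_cycle_double matching_perm_odd inv_matching_perm_in)

lemma ncycles_matching:
  "ncycles (\<pi> \<circ> long_cycle (2*n)) (posset (2*n))
     = ncycles (matching_perm n \<pi>) (posset n) + ncycles (inv (matching_perm n \<pi>) \<circ> long_cycle n) (posset n)"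
proof -
  let ?odds = "{x \<in> posset (2*n). odd x}" and ?evens = "{x \<in> posset (2*n). even x}"
  have "ncycles (\<pi> \<circ> long_cycle (2*n)) (?odds \<union> ?evens)
      = ncycles (\<pi> \<circ> long_cycle (2*n)) ?odds + ncycles (\<pi> \<circ> long_cycle (2*n)) ?evens"
  proof (rule ncycles_Un_disjoint)
    show "\<forall>x\<in>?odds. (\<pi> \<circ> long_cycle (2*n)) x \<in> ?odds"
      unfolding odd_posset_double by (auto simp: long_cycle_double matching_perm_even)
    show "\<forall>x\<in>?evens. (\<pi> \<circ> long_cycle (2*n)) x \<in> ?evens"
      unfolding even_posset_double
      by (auto simp: long_cycle_double matching_perm_odd inv_matching_perm_in)
  qed (auto intro: rev_finite_subset[OF finite_posset])
  moreover have "?odds \<union> ?evens = posset (2*n)"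
    by auto
  ultimately show ?thesis
    by (simp add: ncycles_matching_odds ncycles_matching_evens)
qed

lemma perm_matching_matching_perm: "perm_matching n (matching_perm n \<pi>) = \<pi>"
proof
  fix x
  show "perm_matching n (matching_perm n \<pi>) x = \<pi> x"
  proof (cases "x \<in> posset (2*n)")
    case True
    then show ?thesis
      by (cases rule: posset_double_cases)
        (simp_all add: perm_matching_even perm_matching_odd matching_perm_even matching_perm_odd)
  qed (simp add: perm_matching_outside parity_matchingD(4))
qed

end

context
  fixes n :: nat and \<rho> :: "int \<Rightarrow> int"
  assumes perm: "\<rho> permutes posset n"
begin

lemma perm_matching_in: "perm_matching n \<rho> \<in> parity_matchings n"
proof -
  have perm_in: "\<rho> i \<in> posset n" "inv \<rho> i \<in> posset n" if "i \<in> posset n" for i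
    using that by (simp_all only: permutes_in_image[OF perm] permutes_in_image[OF permutes_inv[OF perm]])
  have "perm_matching n \<rho> x \<in> posset (2*n) \<and> perm_matching n \<rho> (perm_matching n \<rho> x) = x
      \<and> perm_matching n \<rho> x \<noteq> x \<and> (even x \<longrightarrow> odd (perm_matching n \<rho> x))"
    if "x \<in> posset (2*n)" for x
    using that
  proof (cases rule: posset_double_cases)
    case (even i)
    then show ?thesis
      using perm_in[of i] by (auto simp: perm_matching_even perm_matching_odd double_in_posset
          permutes_inverses(2)[OF perm] dest: arg_cong[of _ _ even])
  next
    case (odd i)
    then show ?thesis
      using perm_in[of i] by (auto simp: perm_matching_even perm_matching_odd double_in_posset
          permutes_inverses(1)[OF perm] dest: arg_cong[of _ _ even])
  qed
  then show ?thesis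
    unfolding parity_matchings_def fpf_involution_iff by (simp add: perm_matching_outside)
qed

lemma matching_perm_perm_matching: "matching_perm n (perm_matching n \<rho>) = \<rho>"
  by (auto simp: matching_perm_def perm_matching_even permutes_not_in[OF perm])

end

lemma bij_betw_matching_perm:
  "bij_betw (matching_perm n) (parity_matchings n) {\<rho>. \<rho> permutes posset n}"
  by (rule bij_betw_byWitness[where f' = "perm_matching n"])
    (auto simp: perm_matching_matching_perm matching_perm_perm_matching
      matching_perm_permutes perm_matching_in)

lemma a_tilde_iff:
  assumes "\<pi> \<in> parity_matchings n"
  shows "\<pi> \<in> a_tilde g p n \<longleftrightarrow> matching_perm n \<pi> \<in> a_hat g p n"
proof -
  have "inv \<pi> = \<pi>"
    using assms inv_fpf_involution unfolding parity_matchings_def by blast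
  moreover have "fpf_involution \<pi> (posset (2*n)) \<and> (\<forall>a\<in>posset (2*n). even a \<longrightarrow> odd (\<pi> a))"
    using assms unfolding parity_matchings_def by blast
  ultimately show ?thesis
    unfolding a_tilde_def a_hat_def mem_Collect_eq
    by (simp add: ncycles_matching[OF assms] ncycles_matching_odds[OF assms]
        matching_perm_permutes[OF assms]) linarith
qed

lemma bij_betw_a_tilde_a_hat: "bij_betw (matching_perm n) (a_tilde g p n) (a_hat g p n)"
proof -
  have "bij_betw (matching_perm n) {\<pi> \<in> parity_matchings n. \<pi> \<in> a_tilde g p n}
      {\<rho> \<in> {\<rho>. \<rho> permutes posset n}. \<rho> \<in> a_hat g p n}"
    by (rule bij_betw_Collect[OF bij_betw_matching_perm]) (rule a_tilde_iff[symmetric])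
  moreover have "{\<pi> \<in> parity_matchings n. \<pi> \<in> a_tilde g p n} = a_tilde g p n"
    by (auto simp: a_tilde_def parity_matchings_def)
  moreover have "{\<rho> \<in> {\<rho>. \<rho> permutes posset n}. \<rho> \<in> a_hat g p n} = a_hat g p n"
    by (auto simp: a_hat_def)
  ultimately show ?thesis
    by simp
qed

subsection \<open>Symmetric matchings of \<open>\<plusminus>[2n]\<close> and permutations of \<open>\<plusminus>[n]\<close>\<close>

lemma Wset_iff:
  "x \<in> Wset n \<longleftrightarrow> (1 \<le> x \<and> x \<le> 2 * int n \<and> even x) \<or> (- 2 * int n \<le> x \<and> x \<le> -1 \<and> odd x)"
  by (auto simp: Wset_def mem_posset mem_negset)

lemma Bset_iff:
  "x \<in> Bset n \<longleftrightarrow> (1 \<le> x \<and> x \<le> 2 * int n \<and> odd x) \<or> (- 2 * int n \<le> x \<and> x \<le> -1 \<and> even x)"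
  by (auto simp: Bset_def mem_posset mem_negset)

lemma uminus_in_Bset_iff: "- x \<in> Bset n \<longleftrightarrow> x \<in> Wset n"
  by (auto simp: Wset_iff Bset_iff)

lemma uminus_in_Wset_iff: "- x \<in> Wset n \<longleftrightarrow> x \<in> Bset n"
  by (auto simp: Wset_iff Bset_iff)

lemma uminus_Wset_image: "uminus ` Wset n = Bset n"
proof
  show "uminus ` Wset n \<subseteq> Bset n"
    using uminus_in_Bset_iff by blast
  show "Bset n \<subseteq> uminus ` Wset n"
  proof
    fix b
    assume "b \<in> Bset n"
    then have "- b \<in> Wset n"
      by (simp add: uminus_in_Wset_iff)
    then show "b \<in> uminus ` Wset n"
      by (rule rev_image_eqI) simp
  qed
qed

lemma Wset_Bset_disjoint: "Wset n \<inter> Bset n = {}"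
  by (auto simp: Wset_iff Bset_iff)

lemma Wset_Un_Bset: "Wset n \<union> Bset n = pmset (2*n)"
  by (auto simp: Wset_iff Bset_iff mem_pmset)

lemma tau2_eq:
  "tau2 (2*n) x =
     (if - 2 * int n \<le> x \<and> x \<le> -1 then (if - x < 2 * int n then - x + 1 else 1)
      else if 1 \<le> x \<and> x \<le> 2 * int n then (if x = 1 then - 2 * int n else - (x - 1))
      else x)"
  by (auto simp: tau2_def mem_posset mem_negset)

lemma tau2_tau2: "tau2 (2*n) (tau2 (2*n) x) = x"
  by (auto simp: tau2_eq)

lemma tau2_Wset: "w \<in> Wset n \<Longrightarrow> tau2 (2*n) w \<in> Wset n"
  by (auto simp: tau2_eq Wset_iff) presburger

lemma tau2_Bset: "b \<in> Bset n \<Longrightarrow> tau2 (2*n) b \<in> Bset n"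
  by (auto simp: tau2_eq Bset_iff)

lemma tau2_Wset_pos_iff: "w \<in> Wset n \<Longrightarrow> 0 < tau2 (2*n) w \<longleftrightarrow> \<not> 0 < w"
  by (auto simp: tau2_eq Wset_iff)

(* Labelling of W(n) by \<plusminus>[n] under which negation becomes tau_2 (to_W_uminus) and
   the cycle 1~_n becomes x \<mapsto> -tau_2(-tau_2 x) (to_W_long_cycle_pm). *)
definition to_W :: "nat \<Rightarrow> int \<Rightarrow> int" where
  "to_W n y = (if y > 0 then 2 * int n + 2 - 2 * y else - (2 * int n + 1 + 2 * y))"

definition from_W :: "nat \<Rightarrow> int \<Rightarrow> int" where
  "from_W n w = (if w > 0 then int n + 1 - w div 2 else - (int n + 1 - (1 - w) div 2))"

lemma to_W_in: "y \<in> pmset n \<Longrightarrow> to_W n y \<in> Wset n"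
  by (auto simp: to_W_def Wset_iff mem_pmset)

lemma to_W_in_pmset: "y \<in> pmset n \<Longrightarrow> to_W n y \<in> pmset (2*n)"
  using to_W_in Wset_Un_Bset by blast

lemma from_W_to_W: "y \<in> pmset n \<Longrightarrow> from_W n (to_W n y) = y"
  by (auto simp: to_W_def from_W_def mem_pmset)

lemma from_W_in: "w \<in> Wset n \<Longrightarrow> from_W n w \<in> pmset n"
  by (auto simp: from_W_def Wset_iff mem_pmset)

lemma to_W_from_W: "w \<in> Wset n \<Longrightarrow> to_W n (from_W n w) = w"
  by (auto simp: to_W_def from_W_def Wset_iff)

lemma inj_on_to_W: "inj_on (to_W n) (pmset n)"
  by (metis from_W_to_W inj_onI)

lemma to_W_image: "to_W n ` pmset n = Wset n"
  using to_W_in from_W_in to_W_from_W by (metis image_eqI image_subsetI subset_antisym subsetI)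

lemma to_W_pos_iff: "y \<in> pmset n \<Longrightarrow> 0 < to_W n y \<longleftrightarrow> 0 < y"
  by (auto simp: to_W_def mem_pmset)

lemma to_W_uminus: "y \<in> pmset n \<Longrightarrow> to_W n (- y) = tau2 (2*n) (to_W n y)"
  by (auto simp: tau2_eq to_W_def mem_pmset) presburger+

lemma to_W_long_cycle_pm:
  "y \<in> pmset n \<Longrightarrow> tau2 (2*n) (- tau2 (2*n) (to_W n y)) = - to_W n (long_cycle_pm n y)"
  by (auto simp: tau2_eq to_W_def long_cycle_pm_def long_cycle_eq mem_pmset mem_negset)

lemma long_cycle_pm_in: "y \<in> pmset n \<Longrightarrow> long_cycle_pm n y \<in> pmset n"
  by (auto simp: long_cycle_pm_def long_cycle_eq mem_pmset mem_negset)

lemma tau0_comm_iff: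
  assumes "f permutes pmset m"
  shows "tau0 m \<circ> f = f \<circ> tau0 m \<longleftrightarrow> (\<forall>x\<in>pmset m. f (- x) = - f x)"
proof -
  have "tau0 m (f x) = f (tau0 m x) \<longleftrightarrow> (x \<in> pmset m \<longrightarrow> f (- x) = - f x)" for x
    using permutes_in_image[OF assms, of x] permutes_not_in[OF assms, of x]
    by (auto simp: tau0_def)
  then show ?thesis
    by (auto simp: fun_eq_iff)
qed

lemma tau0_conj_eq_inv_iff:
  assumes "f permutes pmset m"
  shows "tau0 m \<circ> f \<circ> tau0 m = inv f \<longleftrightarrow> (\<forall>y\<in>pmset m. f (- f y) = - y)"
proof -
  have "(tau0 m \<circ> f \<circ> tau0 m) x = inv f x \<longleftrightarrow> (x \<in> pmset m \<longrightarrow> f (- f (- x)) = x)" for x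
  proof (cases "x \<in> pmset m")
    case True
    then have "f (- x) \<in> pmset m"
      using uminus_in_pmset_iff permutes_in_image[OF assms] by blast
    then show ?thesis
      using True uminus_in_pmset_iff permutes_inv_eq[OF assms, of x "- f (- x)"] by (auto simp: tau0_def)
  next
    case False
    then show ?thesis
      using permutes_not_in[OF assms] permutes_not_in[OF permutes_inv[OF assms]]
      by (simp add: tau0_def)
  qed
  then show ?thesis
    using uminus_in_pmset_iff by (auto simp: fun_eq_iff) (metis minus_minus)
qed

lemma fpf_tau0_iff:
  assumes "f permutes pmset m"
  shows "fpf_on (tau0 m \<circ> f) (pmset m) \<longleftrightarrow> (\<forall>y\<in>pmset m. f y \<noteq> - y)"
  using permutes_in_image[OF assms] by (auto simp: fpf_on_def tau0_def)

definition sym_matchings :: "nat \<Rightarrow> (int \<Rightarrow> int) set" where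
  "sym_matchings n = {\<tau>. fpf_involution \<tau> (pmset (2*n))
     \<and> tau0 (2*n) \<circ> \<tau> = \<tau> \<circ> tau0 (2*n) \<and> \<tau> ` Bset n \<subseteq> Bset n}"

definition sym_perms :: "nat \<Rightarrow> (int \<Rightarrow> int) set" where
  "sym_perms n = {t. t permutes pmset n
     \<and> tau0 n \<circ> t \<circ> tau0 n = inv t \<and> fpf_on (tau0 n \<circ> t) (pmset n)}"

definition sym_matching_perm :: "nat \<Rightarrow> (int \<Rightarrow> int) \<Rightarrow> int \<Rightarrow> int" where
  "sym_matching_perm n \<tau> =
     (\<lambda>y. if y \<in> pmset n then from_W n (tau2 (2*n) (\<tau> (to_W n y))) else y)"

definition sym_perm_matching :: "nat \<Rightarrow> (int \<Rightarrow> int) \<Rightarrow> int \<Rightarrow> int" where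
  "sym_perm_matching n t = (\<lambda>x.
     if x \<in> Wset n then to_W n (- t (from_W n x))
     else if x \<in> Bset n then - to_W n (- t (from_W n (- x)))
     else x)"

lemma sym_perm_matching_to_W:
  "y \<in> pmset n \<Longrightarrow> sym_perm_matching n t (to_W n y) = to_W n (- t y)"
  by (simp add: sym_perm_matching_def to_W_in from_W_to_W)

lemma sym_perm_matching_Bset:
  "x \<in> Bset n \<Longrightarrow> sym_perm_matching n t x = - sym_perm_matching n t (- x)"
  using Wset_Bset_disjoint uminus_in_Wset_iff by (auto simp: sym_perm_matching_def)

context
  fixes n :: nat and \<tau> :: "int \<Rightarrow> int"
  assumes matching: "\<tau> \<in> sym_matchings n"
begin

lemma sym_matchingD:
  "x \<in> pmset (2*n) \<Longrightarrow> \<tau> x \<in> pmset (2*n)"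
  "x \<in> pmset (2*n) \<Longrightarrow> \<tau> (\<tau> x) = x"
  "x \<in> pmset (2*n) \<Longrightarrow> \<tau> x \<noteq> x"
  "x \<notin> pmset (2*n) \<Longrightarrow> \<tau> x = x"
  "x \<in> Bset n \<Longrightarrow> \<tau> x \<in> Bset n"
  using matching unfolding sym_matchings_def fpf_involution_iff by blast+

lemma sym_matching_permutes: "\<tau> permutes pmset (2*n)"
  using matching unfolding sym_matchings_def fpf_involution_def by blast

lemma sym_matching_uminus: "x \<in> pmset (2*n) \<Longrightarrow> \<tau> (- x) = - \<tau> x"
  using matching tau0_comm_iff[OF sym_matching_permutes] unfolding sym_matchings_def by blast

lemma sym_matching_Wset: "x \<in> Wset n \<Longrightarrow> \<tau> x \<in> Wset n"
  using sym_matchingD(5) sym_matching_uminus Wset_Un_Bset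
  by (metis UnI1 uminus_in_Bset_iff)

lemma sym_matching_perm_in:
  "y \<in> pmset n \<Longrightarrow> sym_matching_perm n \<tau> y \<in> pmset n"
  by (simp add: sym_matching_perm_def from_W_in tau2_Wset sym_matching_Wset to_W_in)

lemma to_W_sym_matching_perm:
  "y \<in> pmset n \<Longrightarrow> to_W n (sym_matching_perm n \<tau> y) = tau2 (2*n) (\<tau> (to_W n y))"
  by (simp add: sym_matching_perm_def to_W_from_W tau2_Wset sym_matching_Wset to_W_in)

lemma sym_matching_perm_permutes: "sym_matching_perm n \<tau> permutes pmset n"
proof (rule permutes_of_inj_on)
  show "inj_on (sym_matching_perm n \<tau>) (pmset n)"
  proof (rule inj_onI)
    fix y z
    assume yz: "y \<in> pmset n" "z \<in> pmset n" "sym_matching_perm n \<tau> y = sym_matching_perm n \<tau> z"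
    then have "\<tau> (\<tau> (to_W n y)) = \<tau> (\<tau> (to_W n z))"
      using to_W_sym_matching_perm tau2_tau2 by metis
    then have "to_W n y = to_W n z"
      using yz(1,2) sym_matchingD(2) to_W_in_pmset by metis
    then show "y = z"
      using yz(1,2) from_W_to_W by metis
  qed
  show "\<forall>y\<in>pmset n. sym_matching_perm n \<tau> y \<in> pmset n"
    using sym_matching_perm_in by blast
qed (simp_all add: finite_pmset sym_matching_perm_def)

lemma sym_matching_perm_in_sym_perms: "sym_matching_perm n \<tau> \<in> sym_perms n"
  unfolding sym_perms_def mem_Collect_eq
    tau0_conj_eq_inv_iff[OF sym_matching_perm_permutes] fpf_tau0_iff[OF sym_matching_perm_permutes]
proof (intro conjI ballI sym_matching_perm_permutes)
  fix y
  assume y: "y \<in> pmset n"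
  let ?t = "sym_matching_perm n \<tau>"
  have "to_W n (?t (- ?t y)) = tau2 (2*n) (\<tau> (tau2 (2*n) (tau2 (2*n) (\<tau> (to_W n y)))))"
    using y uminus_in_pmset_iff sym_matching_perm_in
    by (simp add: to_W_sym_matching_perm to_W_uminus)
  also have "\<dots> = to_W n (- y)"
    using y by (simp add: tau2_tau2 sym_matchingD(2) to_W_in_pmset to_W_uminus)
  finally show "?t (- ?t y) = - y"
    using y uminus_in_pmset_iff sym_matching_perm_in inj_on_to_W by (metis inj_onD)
  show "?t y \<noteq> - y"
  proof
    assume "?t y = - y"
    then have "tau2 (2*n) (\<tau> (to_W n y)) = tau2 (2*n) (to_W n y)"
      using y by (metis to_W_sym_matching_perm to_W_uminus)
    then show False
      using y sym_matchingD(3) to_W_in_pmset tau2_tau2 by metis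
  qed
qed

lemma ncycles_sym_matching_perm:
  "ncycles (sym_matching_perm n \<tau>) (pmset n) = ncycles (tau2 (2*n) \<circ> \<tau>) (Wset n)"
  unfolding to_W_image[symmetric]
  by (rule ncycles_image_semiconj[symmetric])
    (simp_all add: inj_on_to_W sym_matching_perm_in to_W_sym_matching_perm)

lemma ncycles_long_cycle_pm_sym_matching_perm:
  "ncycles (long_cycle_pm n \<circ> sym_matching_perm n \<tau>) (pmset n) = ncycles (tau2 (2*n) \<circ> \<tau>) (Bset n)"
proof -
  have Bset_eq: "Bset n = (\<lambda>y. - to_W n y) ` pmset n"
    by (simp add: uminus_Wset_image[symmetric] to_W_image[symmetric] image_image)
  have inj: "inj_on (\<lambda>y. - to_W n y) (pmset n)"
    using inj_on_to_W by (auto simp: inj_on_def)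
  have closed: "\<forall>y\<in>pmset n. (long_cycle_pm n \<circ> sym_matching_perm n \<tau>) y \<in> pmset n"
    by (simp add: long_cycle_pm_in sym_matching_perm_in)
  have "\<forall>y\<in>pmset n. (tau2 (2*n) \<circ> \<tau>) (- to_W n y)
      = - to_W n ((long_cycle_pm n \<circ> sym_matching_perm n \<tau>) y)"
    using sym_matching_perm_in
    by (simp add: sym_matching_uminus to_W_in_pmset to_W_sym_matching_perm tau2_tau2
        to_W_long_cycle_pm[symmetric])
  then show ?thesis
    unfolding Bset_eq by (rule ncycles_image_semiconj[OF inj closed, symmetric])
qed

lemma ncycles_sym_matching:
  "ncycles (tau2 (2*n) \<circ> \<tau>) (pmset (2*n))
     = ncycles (tau2 (2*n) \<circ> \<tau>) (Wset n) + ncycles (tau2 (2*n) \<circ> \<tau>) (Bset n)"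
  unfolding Wset_Un_Bset[symmetric]
  by (rule ncycles_Un_disjoint)
    (use finite_pmset[of "2*n", folded Wset_Un_Bset] in
      \<open>simp_all add: Wset_Bset_disjoint tau2_Wset tau2_Bset sym_matching_Wset sym_matchingD(5)\<close>)

lemma fpf_tau0_sym_matching: "fpf_on (tau0 (2*n) \<circ> \<tau>) (pmset (2*n))"
  unfolding fpf_tau0_iff[OF sym_matching_permutes]
proof
  fix x
  assume "x \<in> pmset (2*n)"
  then consider "x \<in> Wset n" | "x \<in> Bset n"
    using Wset_Un_Bset by blast
  then show "\<tau> x \<noteq> - x"
    using sym_matching_Wset sym_matchingD(5) Wset_Bset_disjoint uminus_in_Bset_iff uminus_in_Wset_iff
    by cases (metis disjoint_iff)+
qed

lemma sym_matching_perm_pos_iff: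
  "y \<in> pmset n \<Longrightarrow> 0 < sym_matching_perm n \<tau> y \<longleftrightarrow> \<not> 0 < \<tau> (to_W n y)"
  using to_W_pos_iff[OF sym_matching_perm_in] tau2_Wset_pos_iff[OF sym_matching_Wset[OF to_W_in]]
  by (simp add: to_W_sym_matching_perm)

lemma sym_matching_sign_kept_iff:
  "(\<exists>a\<in>posset (2*n). \<tau> a \<in> posset (2*n)) \<longleftrightarrow> (\<exists>w\<in>Wset n. (0 < w) = (0 < \<tau> w))"
proof
  assume "\<exists>a\<in>posset (2*n). \<tau> a \<in> posset (2*n)"
  then obtain a where "a \<in> posset (2*n)" "\<tau> a \<in> posset (2*n)"
    by blast
  moreover have a: "a \<in> pmset (2*n)"
    using \<open>a \<in> posset (2*n)\<close> by (simp add: pmset_def)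
  ultimately have "0 < a" "0 < \<tau> a"
    using posset_iff_pos sym_matchingD(1) by blast+
  show "\<exists>w\<in>Wset n. (0 < w) = (0 < \<tau> w)"
  proof (cases "a \<in> Wset n")
    case True
    then show ?thesis
      using \<open>0 < a\<close> \<open>0 < \<tau> a\<close> by blast
  next
    case False
    then have "- a \<in> Wset n"
      using a Wset_Un_Bset uminus_in_Wset_iff by blast
    then show ?thesis
      using \<open>0 < a\<close> \<open>0 < \<tau> a\<close> sym_matching_uminus[OF a] by (metis neg_less_0_iff_less order.asym)
  qed
next
  assume "\<exists>w\<in>Wset n. (0 < w) = (0 < \<tau> w)"
  then obtain w where w: "w \<in> Wset n" "(0 < w) = (0 < \<tau> w)"
    by blast
  then have w_in: "w \<in> pmset (2*n)" "- w \<in> pmset (2*n)"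
    using Wset_Un_Bset uminus_in_pmset_iff by blast+
  then have "w \<noteq> 0" "\<tau> w \<noteq> 0"
    using pmset_nonzero sym_matchingD(1) by blast+
  then obtain a where "a \<in> pmset (2*n)" "0 < a" "0 < \<tau> a"
    using w w_in sym_matching_uminus[of w]
    by (metis neg_0_less_iff_less linorder_neqE_linordered_idom)
  then show "\<exists>a\<in>posset (2*n). \<tau> a \<in> posset (2*n)"
    using posset_iff_pos sym_matchingD(1) by blast
qed

lemma sym_matching_crossing_iff:
  "(\<exists>a\<in>posset (2*n). \<tau> a \<in> posset (2*n)) \<longleftrightarrow> (\<exists>a\<in>posset n. sym_matching_perm n \<tau> a \<in> negset n)"
  unfolding sym_matching_sign_kept_iff permutes_pmset_sign_change_iff[OF sym_matching_perm_permutes]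
    to_W_image[symmetric]
  by (auto simp: sym_matching_perm_pos_iff to_W_pos_iff)

lemma sym_perm_matching_sym_matching_perm: "sym_perm_matching n (sym_matching_perm n \<tau>) = \<tau>"
proof
  have on_Wset: "sym_perm_matching n (sym_matching_perm n \<tau>) x = \<tau> x" if "x \<in> Wset n" for x
  proof -
    obtain y where y: "y \<in> pmset n" "x = to_W n y"
      using \<open>x \<in> Wset n\<close> to_W_image by blast
    then show ?thesis
      by (simp add: sym_perm_matching_to_W to_W_uminus sym_matching_perm_in to_W_sym_matching_perm
          tau2_tau2)
  qed
  fix x
  consider "x \<in> Wset n" | "x \<in> Bset n" | "x \<notin> pmset (2*n)"
    using Wset_Un_Bset by blast
  then show "sym_perm_matching n (sym_matching_perm n \<tau>) x = \<tau> x"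
  proof cases
    case 2
    then have "x \<notin> Wset n" "- x \<in> Wset n" "x \<in> pmset (2*n)"
      using Wset_Bset_disjoint uminus_in_Wset_iff Wset_Un_Bset by blast+
    then show ?thesis
      using 2 on_Wset[of "- x"] sym_matching_uminus[of x] sym_perm_matching_Bset by simp
  qed (use on_Wset sym_matchingD(4) Wset_Un_Bset in \<open>auto simp: sym_perm_matching_def\<close>)
qed

end

context
  fixes n :: nat and t :: "int \<Rightarrow> int"
  assumes sym_perm: "t \<in> sym_perms n"
begin

lemma sym_permD:
  "t permutes pmset n"
  "y \<in> pmset n \<Longrightarrow> t y \<in> pmset n"
  "y \<in> pmset n \<Longrightarrow> t (- t y) = - y"
  "y \<in> pmset n \<Longrightarrow> t y \<noteq> - y"
proof -
  show perm: "t permutes pmset n"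
    using sym_perm by (simp add: sym_perms_def)
  show "y \<in> pmset n \<Longrightarrow> t y \<in> pmset n"
    by (simp add: permutes_in_image[OF perm])
  show "y \<in> pmset n \<Longrightarrow> t (- t y) = - y" "y \<in> pmset n \<Longrightarrow> t y \<noteq> - y"
    using sym_perm by (auto simp: sym_perms_def tau0_conj_eq_inv_iff[OF perm] fpf_tau0_iff[OF perm])
qed

lemma sym_perm_matching_Wset:
  assumes "x \<in> Wset n"
  shows "sym_perm_matching n t x \<in> Wset n"
    "sym_perm_matching n t (sym_perm_matching n t x) = x"
    "sym_perm_matching n t x \<noteq> x"
proof -
  obtain y where y: "y \<in> pmset n" "x = to_W n y"
    using assms to_W_image by blast
  then have ty: "- t y \<in> pmset n"
    by (simp add: sym_permD(2) uminus_in_pmset_iff)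
  show "sym_perm_matching n t x \<in> Wset n"
    using y ty by (simp add: sym_perm_matching_to_W to_W_in)
  show "sym_perm_matching n t (sym_perm_matching n t x) = x"
    using y ty by (simp add: sym_perm_matching_to_W sym_permD(3))
  show "sym_perm_matching n t x \<noteq> x"
    using y sym_permD(4)[OF y(1)] inj_onD[OF inj_on_to_W _ ty y(1)]
    by (auto simp: sym_perm_matching_to_W)
qed

lemma sym_perm_matching_in: "sym_perm_matching n t \<in> sym_matchings n"
proof -
  let ?s = "sym_perm_matching n t"
  have on_Bset: "?s x \<in> Bset n \<and> ?s (?s x) = x \<and> ?s x \<noteq> x" if "x \<in> Bset n" for x
  proof -
    have "- x \<in> Wset n"
      using that by (simp add: uminus_in_Wset_iff)
    then show ?thesis
      using sym_perm_matching_Wset[of "- x"] sym_perm_matching_Bset that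
      by (metis minus_minus uminus_in_Bset_iff)
  qed
  have outside: "?s x = x" if "x \<notin> pmset (2*n)" for x
    using that Wset_Un_Bset by (auto simp: sym_perm_matching_def)
  have "\<forall>x\<in>pmset (2*n). ?s x \<in> pmset (2*n) \<and> ?s (?s x) = x \<and> ?s x \<noteq> x"
    using sym_perm_matching_Wset on_Bset Wset_Un_Bset by blast
  then have invol: "fpf_involution ?s (pmset (2*n))"
    unfolding fpf_involution_iff using outside by blast
  have "?s (- x) = - ?s x" if "x \<in> pmset (2*n)" for x
    using that Wset_Un_Bset sym_perm_matching_Bset uminus_in_Bset_iff by (metis Un_iff minus_minus)
  then have "tau0 (2*n) \<circ> ?s = ?s \<circ> tau0 (2*n)"
    using tau0_comm_iff invol unfolding fpf_involution_def by blast
  then show ?thesis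
    unfolding sym_matchings_def using invol on_Bset by blast
qed

lemma sym_matching_perm_sym_perm_matching: "sym_matching_perm n (sym_perm_matching n t) = t"
proof
  fix y
  show "sym_matching_perm n (sym_perm_matching n t) y = t y"
  proof (cases "y \<in> pmset n")
    case True
    then have "tau2 (2*n) (to_W n (- t y)) = to_W n (t y)"
      using to_W_uminus[of "- t y"] by (simp add: sym_permD(2) uminus_in_pmset_iff tau2_tau2)
    then show ?thesis
      using True by (simp add: sym_matching_perm_def sym_perm_matching_to_W from_W_to_W sym_permD(2))
  qed (simp add: sym_matching_perm_def permutes_not_in[OF sym_permD(1)])
qed

end

lemma bij_betw_sym_matching_perm:
  "bij_betw (sym_matching_perm n) (sym_matchings n) (sym_perms n)"
  by (rule bij_betw_byWitness[where f' = "sym_perm_matching n"])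
    (auto simp: sym_perm_matching_sym_matching_perm sym_matching_perm_sym_perm_matching
      sym_matching_perm_in_sym_perms sym_perm_matching_in)

lemma b_tilde_iff:
  assumes "\<tau> \<in> sym_matchings n"
  shows "\<tau> \<in> b_tilde k p n \<longleftrightarrow> sym_matching_perm n \<tau> \<in> b_hat k p n"
proof -
  have "fpf_involution \<tau> (pmset (2*n)) \<and> tau0 (2*n) \<circ> \<tau> = \<tau> \<circ> tau0 (2*n) \<and> \<tau> ` Bset n \<subseteq> Bset n"
    using assms unfolding sym_matchings_def by blast
  moreover have "sym_matching_perm n \<tau> \<in> sym_perms n"
    using assms by (rule sym_matching_perm_in_sym_perms)
  ultimately show ?thesis
    unfolding b_tilde_def b_hat_def mem_Collect_eq sym_perms_def
    using fpf_tau0_sym_matching[OF assms]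
    by (simp add: ncycles_sym_matching[OF assms] ncycles_sym_matching_perm[OF assms]
        ncycles_long_cycle_pm_sym_matching_perm[OF assms] sym_matching_crossing_iff[OF assms])
      linarith
qed

lemma bij_betw_b_tilde_b_hat: "bij_betw (sym_matching_perm n) (b_tilde k p n) (b_hat k p n)"
proof -
  have "bij_betw (sym_matching_perm n) {\<tau> \<in> sym_matchings n. \<tau> \<in> b_tilde k p n}
      {t \<in> sym_perms n. t \<in> b_hat k p n}"
    by (rule bij_betw_Collect[OF bij_betw_sym_matching_perm]) (rule b_tilde_iff[symmetric])
  moreover have "{\<tau> \<in> sym_matchings n. \<tau> \<in> b_tilde k p n} = b_tilde k p n"
    by (auto simp: b_tilde_def sym_matchings_def)
  moreover have "{t \<in> sym_perms n. t \<in> b_hat k p n} = b_hat k p n"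
    by (auto simp: b_hat_def sym_perms_def)
  ultimately show ?thesis
    by simp
qed

theorem lemma2:
  fixes n g k p :: nat
  shows "(\<exists>f. bij_betw f (a_tilde g p n) (a_hat g p n))
       \<and> (\<exists>f. bij_betw f (b_tilde k p n) (b_hat k p n))"
  using bij_betw_a_tilde_a_hat bij_betw_b_tilde_b_hat by blast

end
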